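(* Let $K,L\subset\mathbb{R}^n$ be nonempty compact sets whose boundaries $\partial K$ and $\partial L$ are connected, and suppose that for every $x\in\mathbb{R}^n$, neither $K+x$ is strictly contained in $-L$ nor $-L$ is strictly contained in $K+x$. Then \[K+L=\partial K+\partial L.\]
   Context: $X+Y=\{x+y:x\in X,y\in Y\}$ is the Minkowski sum, $-L=\{-y:y\in L\}$, $K+x=\{k+x:k\in K\}$, and "strictly contained" means contained and not equal. *)

theory Defs
  imports "HOL-Analysis.Analysis"
begin

end

theory Submission imports Defs begin

(* Translating by -z shows that z \<in> K + L iff K - z meets -L, and z \<in> \<partial>K + \<partial>L iff the
   frontiers of these two sets meet.  So it suffices that two intersecting compact sets A, B with
   connected frontiers, neither strictly containing the other, have intersecting frontiers.
   If the frontiers were disjoint, connectedness would put each frontier either inside the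
   interior of the other set or outside it.  Both inside makes A \<union> B a bounded set without
   frontier, both outside does the same for A \<inter> B; in the mixed cases one set is strictly
   contained in the other. *)

lemma frontier_negations:
  fixes S :: "'a::real_normed_vector set"
  shows "frontier (uminus ` S) = uminus ` frontier S"
proof -
  have "homeomorphic_map euclidean euclidean (uminus :: 'a \<Rightarrow> 'a)"
    unfolding homeomorphic_map_maps homeomorphic_maps_def
    by (intro exI[of _ uminus]) (simp add: continuous_on_minus)
  then show ?thesis
    using homeomorphic_map_frontier_of[of euclidean euclidean uminus S] by simp
qed

lemma bounded_frontier_empty:
  fixes S :: "'a::{real_normed_vector, perfect_space} set"
  assumes "bounded S" "frontier S = {}"
  shows "S = {}"
  using assms frontier_eq_empty not_bounded_UNIV by blast

lemma connected_subset_interior_or_disjoint: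
  assumes "connected C" "closed A" "C \<inter> frontier A = {}"
  shows "C \<subseteq> interior A \<or> C \<inter> A = {}"
proof -
  have "C \<subseteq> A \<or> C \<inter> A = {}"
    using connected_Int_frontier[OF assms(1), of A] assms(3) by blast
  moreover have "A - frontier A \<subseteq> interior A"
    using assms(2) by (auto simp: frontier_def)
  ultimately show ?thesis
    using assms(3) by blast
qed

lemma compact_psubset_of_frontier_subset_interior:
  fixes X Y :: "'a::{real_normed_vector, perfect_space} set"
  assumes "closed X" "compact Y" "Y \<noteq> {}"
    and "frontier Y \<subseteq> interior X" "frontier X \<inter> Y = {}"
  shows "Y \<subset> X"
proof
  have "frontier (Y - interior X) \<subseteq> (frontier Y \<union> frontier X) \<inter> (Y - interior X)"
    using frontier_Int_subset[of Y "- interior X"] frontier_interior_subset[of X]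
      frontier_subset_closed[of "Y - interior X"] compact_imp_closed[OF assms(2)]
    by (auto simp: Diff_eq closed_Int)
  then have "frontier (Y - interior X) = {}"
    using assms(4,5) by blast
  then have "Y - interior X = {}"
    using bounded_frontier_empty compact_imp_bounded[OF assms(2)] bounded_diff by blast
  then show "Y \<subseteq> X"
    using interior_subset by blast
  show "Y \<noteq> X"
  proof
    assume "Y = X"
    then have "frontier Y = {}"
      using assms(4) by (auto simp: frontier_def)
    then show False
      using assms(2,3) bounded_frontier_empty compact_imp_bounded by blast
  qed
qed

lemma frontier_Int_frontier_nonempty:
  fixes A B :: "'a::{real_normed_vector, perfect_space} set"
  assumes "compact A" "compact B" "connected (frontier A)" "connected (frontier B)"
    and "A \<inter> B \<noteq> {}" "\<not> A \<subset> B" "\<not> B \<subset> A"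
  shows "frontier A \<inter> frontier B \<noteq> {}"
proof
  assume disjoint: "frontier A \<inter> frontier B = {}"
  have closed: "closed A" "closed B" and bounded: "bounded A" "bounded B"
    using assms(1,2) compact_imp_closed compact_imp_bounded by auto
  have nonempty: "A \<noteq> {}" "B \<noteq> {}"
    using assms(5) by auto
  have B_cases: "frontier B \<subseteq> interior A \<or> frontier B \<inter> A = {}"
    using connected_subset_interior_or_disjoint[OF assms(4) closed(1)] disjoint by blast
  have A_cases: "frontier A \<subseteq> interior B \<or> frontier A \<inter> B = {}"
    using connected_subset_interior_or_disjoint[OF assms(3) closed(2)] disjoint by blast
  show False
  proof (cases "frontier B \<subseteq> interior A"; cases "frontier A \<subseteq> interior B")
    assume "frontier B \<subseteq> interior A" "frontier A \<subseteq> interior B"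
    then have "frontier A \<union> frontier B \<subseteq> interior (A \<union> B)"
      using interior_mono[of A "A \<union> B"] interior_mono[of B "A \<union> B"] by blast
    then have "frontier (A \<union> B) = {}"
      using frontier_Un_subset[of A B] by (auto simp: frontier_def)
    then show False
      using assms(5) bounded bounded_frontier_empty[of "A \<union> B"] by auto
  next
    assume "frontier B \<subseteq> interior A" "\<not> frontier A \<subseteq> interior B"
    then have "B \<subset> A"
      using A_cases compact_psubset_of_frontier_subset_interior[OF closed(1) assms(2) nonempty(2)]
      by blast
    then show False
      using assms(7) by blast
  next
    assume "\<not> frontier B \<subseteq> interior A" "frontier A \<subseteq> interior B"
    then have "A \<subset> B"
      using B_cases compact_psubset_of_frontier_subset_interior[OF closed(2) assms(1) nonempty(1)]
      by blast
    then show False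
      using assms(6) by blast
  next
    assume "\<not> frontier B \<subseteq> interior A" "\<not> frontier A \<subseteq> interior B"
    then have "frontier (A \<inter> B) \<subseteq> (frontier A \<union> frontier B) \<inter> (A \<inter> B)"
      and "frontier A \<inter> B = {}" "frontier B \<inter> A = {}"
      using A_cases B_cases frontier_Int_subset[of A B]
        frontier_subset_closed[of "A \<inter> B"] closed by (auto simp: closed_Int)
    then have "frontier (A \<inter> B) = {}"
      by blast
    then show False
      using assms(5) bounded bounded_frontier_empty[of "A \<inter> B"] by auto
  qed
qed

lemma mem_sums_iff_translation_Int_negations:
  fixes S T :: "'a::ab_group_add set"
  shows "z \<in> {k + l | k l. k \<in> S \<and> l \<in> T} \<longleftrightarrow> (\<lambda>k. k + - z) ` S \<inter> uminus ` T \<noteq> {}"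
proof -
  have "\<And>k l. k + - z = - l \<longleftrightarrow> z = k + l"
    by (auto simp: algebra_simps)
  then show ?thesis
    by blast
qed

theorem theorem4:
  fixes K L :: "'a::euclidean_space set"
  assumes "compact K" "K \<noteq> {}" "compact L" "L \<noteq> {}"
    and "connected (frontier K)" "connected (frontier L)"
    and "\<forall>x. \<not> ((\<lambda>k. k + x) ` K \<subset> uminus ` L) \<and> \<not> (uminus ` L \<subset> (\<lambda>k. k + x) ` K)"
  shows "{k + l | k l. k \<in> K \<and> l \<in> L} = {k + l | k l. k \<in> frontier K \<and> l \<in> frontier L}"
proof (rule set_eqI)
  fix z
  define A where "A = (\<lambda>k. k + - z) ` K"
  define B where "B = uminus ` L"
  have frontier_A: "frontier A = (\<lambda>k. k + - z) ` frontier K"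
    using frontier_translation[of "- z" K] by (simp add: A_def add.commute)
  have frontier_B: "frontier B = uminus ` frontier L"
    by (simp add: B_def frontier_negations)
  have compact: "compact A" "compact B"
    unfolding A_def B_def by (intro compact_continuous_image continuous_intros assms(1,3))+
  have connected: "connected (frontier A)" "connected (frontier B)"
    unfolding frontier_A frontier_B
    by (intro connected_continuous_image continuous_intros assms(5,6))+
  have no_strict_containment: "\<not> A \<subset> B" "\<not> B \<subset> A"
    using assms(7) unfolding A_def B_def by blast+
  have "frontier A \<inter> frontier B \<subseteq> A \<inter> B"
    using compact frontier_subset_closed compact_imp_closed by blast
  then have "A \<inter> B \<noteq> {} \<longleftrightarrow> frontier A \<inter> frontier B \<noteq> {}"
    using frontier_Int_frontier_nonempty[OF compact connected _ no_strict_containment] by blast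
  then show "z \<in> {k + l | k l. k \<in> K \<and> l \<in> L} \<longleftrightarrow>
      z \<in> {k + l | k l. k \<in> frontier K \<and> l \<in> frontier L}"
    unfolding mem_sums_iff_translation_Int_negations frontier_A frontier_B
    by (simp add: A_def B_def)
qed

end
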